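(* For every $h\in[H]$, with $\kappa=1/K$ and some $\beta=O(L/K)$, there is a matrix $A\in\mathbb R^{|\mathcal M|\times|\mathcal M|}$ (indexed by models) with $\frac1K\mathcal E_B(M,M',h)\le A(M,M')\le\mathcal W_F(M,M',h)$ for all $M,M'\in\mathcal M$ and $\mathrm{rank}(A,\beta)\le L_h/|\mathcal O|$; that is, the witness rank defined with $\mathcal W_F$ satisfies $\mathsf W(1/K,\beta,\mathcal M,\mathcal F,h)\le L_h/|\mathcal O|$.
   Context: Factored MDP setting: $\mathcal O$ finite, $\mathcal X=[H]\times\mathcal O^d$ layered by time, $|\mathcal A|=K$; known parent sets $\mathrm{pa}_i\subseteq[d]$; transitions $P(x'|x,a)=\prod_{i=1}^dP^{(i)}[x'[i]\mid x[\mathrm{pa}_i],a,h]$; known reward $R^\star$ shared by all models, rewards in $[0,1]$ with total reward $\le1$; $\mathcal M$ is the set of all models with reward $R^\star$ and transitions factorizing with these parents, true model $M^\star\in\mathcal M$. $L=\sum_{i=1}^dHK|\mathcal O|^{1+|\mathrm{pa}_i|}$, $L_h=\sum_{i=1}^dK|\mathcal O|^{1+|\mathrm{pa}_i|}$. For model $M$: $V_M,\pi_M$ its optimal value function and greedy policy; $x_h\sim\pi$ the step-$h$ context running $\pi$ in the true MDP; $(r,x')\sim M_h$: $r\sim R^\star(x_h,a_h),x'\sim P(x_h,a_h)$. $\mathcal E_B(M,M',h)=\mathbb E_{x_h\sim\pi_M,a_h\sim\pi_{M'}}[\mathbb E_{M'_h}[r+V_{M'}(x')]-\mathbb E_{M^\star_h}[r+V_{M'}(x')]]$.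 $\mathcal F=\{g_1+\dots+g_d:g_i\in\mathcal G_i\}$, $\mathcal G_i$ all $\{-1,1\}$-valued functions of $(x,a,r,x')$ depending only on $(x[\mathrm{pa}_i],a,h,x'[i])$. $\mathcal W_F(M,M',h)=\max_{f\in\mathcal F}\mathbb E_{x_h\sim\pi_M,a_h\sim U(\mathcal A)}[\mathbb E_{M'_h}f-\mathbb E_{M^\star_h}f]$. For a matrix $B$, $\mathrm{rank}(B,\beta)$ is the least $k$ with $B=UV^\top$, $U,V$ having $k$ columns and $\|u_i\|_2\|v_j\|_2\le\beta$ for all rows $u_i,v_j$. *)

theory Defs
  imports "HOL-Probability.Probability"
begin

text \<open>Observations and actions are finite sets of naturals,
  feature indices are 0..<d, time steps are 1..H. A context at step h is the pair
  of h and an observation vector x, represented as a function nat => nat that lies in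
  PiE {..<d} (\<lambda>_. Obs) (value undefined outside {..<d}).\<close>

record fsetting =
  Obs :: "nat set"
  Act :: "nat set"
  nfeat :: nat
  Hor :: nat
  pa :: "nat \<Rightarrow> nat set"
  Rew :: "nat \<Rightarrow> (nat \<Rightarrow> nat) \<Rightarrow> nat \<Rightarrow> real pmf"
  init :: "(nat \<Rightarrow> nat) pmf"

type_synonym state = "nat \<Rightarrow> nat"

text \<open>A model is given by its factor transition kernels: M h i z a is the law of x'[i]
  given the parent values z = x[pa_i] (a restricted vector), action a, time h.\<close>
type_synonym model = "nat \<Rightarrow> nat \<Rightarrow> state \<Rightarrow> nat \<Rightarrow> nat pmf"

definition states :: "fsetting \<Rightarrow> state set" where
  "states E = PiE {..<nfeat E} (\<lambda>_. Obs E)"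

definition valid_setting :: "fsetting \<Rightarrow> bool" where
  "valid_setting E \<longleftrightarrow>
     finite (Obs E) \<and> Obs E \<noteq> {} \<and> finite (Act E) \<and> Act E \<noteq> {} \<and>
     (\<forall>i<nfeat E. pa E i \<subseteq> {..<nfeat E}) \<and>
     set_pmf (init E) \<subseteq> states E \<and>
     (\<forall>h x a. set_pmf (Rew E h x a) \<subseteq> {0..1}) \<and>
     (\<forall>xs as rs. (\<forall>h\<in>{1..Hor E}. xs h \<in> states E \<and> as h \<in> Act E \<and>
                    rs h \<in> set_pmf (Rew E h (xs h) (as h)))
                 \<longrightarrow> (\<Sum>h=1..Hor E. rs h) \<le> 1)"

text \<open>The model class: all factored transition kernels with values in Obs
  (the reward R* is shared and fixed by the setting).\<close>
definition models :: "fsetting \<Rightarrow> model set" where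
  "models E = {M. \<forall>h i z a. set_pmf (M h i z a) \<subseteq> Obs E}"

definition trans :: "fsetting \<Rightarrow> model \<Rightarrow> nat \<Rightarrow> state \<Rightarrow> nat \<Rightarrow> state pmf" where
  "trans E M h x a = Pi_pmf {..<nfeat E} undefined (\<lambda>i. M h i (restrict x (pa E i)) a)"

definition Er :: "fsetting \<Rightarrow> nat \<Rightarrow> state \<Rightarrow> nat \<Rightarrow> real" where
  "Er E h x a = measure_pmf.expectation (Rew E h x a) (\<lambda>r. r)"

text \<open>Optimal value with n steps remaining (the current step is H + 1 - n).\<close>
fun Vn :: "fsetting \<Rightarrow> model \<Rightarrow> nat \<Rightarrow> state \<Rightarrow> real" where
  "Vn E M 0 x = 0"
| "Vn E M (Suc n) x = Max ((\<lambda>a. Er E (Hor E - n) x a +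
       measure_pmf.expectation (trans E M (Hor E - n) x a) (Vn E M n)) ` Act E)"

text \<open>Optimal value V_M at step h (h in 1..H+1; V at step H+1 is 0).\<close>
definition V :: "fsetting \<Rightarrow> model \<Rightarrow> nat \<Rightarrow> state \<Rightarrow> real" where
  "V E M h x = Vn E M (Hor E + 1 - h) x"

definition Q :: "fsetting \<Rightarrow> model \<Rightarrow> nat \<Rightarrow> state \<Rightarrow> nat \<Rightarrow> real" where
  "Q E M h x a = Er E h x a + measure_pmf.expectation (trans E M h x a) (V E M (h + 1))"

definition pol :: "fsetting \<Rightarrow> model \<Rightarrow> nat \<Rightarrow> state \<Rightarrow> nat" where
  "pol E M h x = (LEAST a. a \<in> Act E \<and> (\<forall>b\<in>Act E. Q E M h x b \<le> Q E M h x a))"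

text \<open>Law of the step-h context when running policy pi in the true MDP Ms.\<close>
fun roll :: "fsetting \<Rightarrow> model \<Rightarrow> (nat \<Rightarrow> state \<Rightarrow> nat) \<Rightarrow> nat \<Rightarrow> state pmf" where
  "roll E Ms \<pi> 0 = init E"
| "roll E Ms \<pi> (Suc h) = (if h = 0 then init E
     else bind_pmf (roll E Ms \<pi> h) (\<lambda>x. trans E Ms h x (\<pi> h x)))"

definition Estep :: "fsetting \<Rightarrow> model \<Rightarrow> nat \<Rightarrow> state \<Rightarrow> nat
                     \<Rightarrow> (nat \<Rightarrow> state \<Rightarrow> nat \<Rightarrow> real \<Rightarrow> state \<Rightarrow> real) \<Rightarrow> real" where
  "Estep E M h x a f = measure_pmf.expectation (Rew E h x a)
      (\<lambda>r. measure_pmf.expectation (trans E M h x a) (\<lambda>x'. f h x a r x'))"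

definition bellman_err :: "fsetting \<Rightarrow> model \<Rightarrow> model \<Rightarrow> model \<Rightarrow> nat \<Rightarrow> real" where
  "bellman_err E Ms M M' h = measure_pmf.expectation (roll E Ms (pol E M) h)
     (\<lambda>x. let a = pol E M' h x;
              g = (\<lambda>h x a r x'. r + V E M' (h + 1) x')
          in Estep E M' h x a g - Estep E Ms h x a g)"

definition Gcls :: "fsetting \<Rightarrow> nat \<Rightarrow> (nat \<Rightarrow> state \<Rightarrow> nat \<Rightarrow> real \<Rightarrow> state \<Rightarrow> real) set" where
  "Gcls E i = {g. (\<forall>h x a r x'. g h x a r x' \<in> {-1, 1}) \<and>
      (\<exists>\<phi>. \<forall>h x a r x'. g h x a r x' = \<phi> (restrict x (pa E i)) a h (x' i))}"

definition Fcls :: "fsetting \<Rightarrow> (nat \<Rightarrow> state \<Rightarrow> nat \<Rightarrow> real \<Rightarrow> state \<Rightarrow> real) set" where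
  "Fcls E = {f. \<exists>g. (\<forall>i<nfeat E. g i \<in> Gcls E i) \<and>
      f = (\<lambda>h x a r x'. \<Sum>i<nfeat E. g i h x a r x')}"

text \<open>Witnessed model misfit W_F(M, M', h) (a maximum over F, written as a supremum).\<close>
definition witness_misfit :: "fsetting \<Rightarrow> model \<Rightarrow> model \<Rightarrow> model \<Rightarrow> nat \<Rightarrow> real" where
  "witness_misfit E Ms M M' h = (SUP f\<in>Fcls E. measure_pmf.expectation (roll E Ms (pol E M) h)
     (\<lambda>x. measure_pmf.expectation (pmf_of_set (Act E))
        (\<lambda>a. Estep E M' h x a f - Estep E Ms h x a f)))"

definition beta_factorization :: "(model \<Rightarrow> model \<Rightarrow> real) \<Rightarrow> model set \<Rightarrow> nat \<Rightarrow> real \<Rightarrow> bool" where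
  "beta_factorization A Ms k \<beta> \<longleftrightarrow>
     (\<exists>u v :: model \<Rightarrow> nat \<Rightarrow> real. \<forall>M\<in>Ms. \<forall>M'\<in>Ms.
        A M M' = (\<Sum>j<k. u M j * v M' j) \<and>
        sqrt (\<Sum>j<k. (u M j)\<^sup>2) * sqrt (\<Sum>j<k. (v M' j)\<^sup>2) \<le> \<beta>)"

definition rank_le :: "(model \<Rightarrow> model \<Rightarrow> real) \<Rightarrow> model set \<Rightarrow> real \<Rightarrow> real \<Rightarrow> bool" where
  "rank_le A Ms \<beta> n \<longleftrightarrow> (\<exists>k. real k \<le> n \<and> beta_factorization A Ms k \<beta>)"

definition witness_rank_le :: "fsetting \<Rightarrow> model \<Rightarrow> real \<Rightarrow> real \<Rightarrow> nat \<Rightarrow> real \<Rightarrow> bool" where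
  "witness_rank_le E Ms \<kappa> \<beta> h n \<longleftrightarrow>
     (\<exists>A. (\<forall>M\<in>models E. \<forall>M'\<in>models E.
            \<kappa> * bellman_err E Ms M M' h \<le> A M M' \<and> A M M' \<le> witness_misfit E Ms M M' h) \<and>
          rank_le A (models E) \<beta> n)"

definition Ltot :: "fsetting \<Rightarrow> nat" where
  "Ltot E = (\<Sum>i<nfeat E. Hor E * card (Act E) * card (Obs E) ^ (1 + card (pa E i)))"

definition Lh :: "fsetting \<Rightarrow> nat" where
  "Lh E = (\<Sum>i<nfeat E. card (Act E) * card (Obs E) ^ (1 + card (pa E i)))"

end

theory Submission
  imports Defs
begin

text \<open>Take for A(M, M') the expectation, over the step-h context x of the roll-in of \<pi>_M and a
  uniformly random action a, of the sum over factors i of the L1 distance between the i-th factor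
  kernels of M' and M* at (x[pa_i], a).

  Lower bound: the reward terms of the Bellman error cancel, and the remaining difference of
  expectations of V_M' under two product measures is at most the sum of the factorwise L1
  distances, because V_M' takes values in [0, 1] (the total reward is at most 1 along every
  trajectory) and the factors can be exchanged one at a time. Averaging instead of fixing the
  greedy action costs the factor 1/K.

  Upper bound: the discriminator that, on factor i, answers +1 exactly where M' puts at least as
  much mass as M* lies in F and attains A(M, M').

  Rank: A(M, M') is a sum over the triples (i, z, a) of parent values z and actions a of
  P(x[pa_i] = z)/K times the distance at (i, z, a). There are L_h/|O| such triples, the first
  factors are at most 1/K and the second at most |O|, so \<beta> = L_h/K \<le> L/K.\<close>

lemma integrable_measure_pmf_bounded:
  fixes F :: "'a \<Rightarrow> real"
  assumes "\<And>x. x \<in> set_pmf p \<Longrightarrow> \<bar>F x\<bar> \<le> B"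
  shows "integrable (measure_pmf p) F"
  by (rule measure_pmf.integrable_const_bound[where B = B]) (auto simp: AE_measure_pmf_iff assms)

lemma abs_expectation_pmf_le:
  fixes F :: "'a \<Rightarrow> real"
  assumes "\<And>x. x \<in> set_pmf p \<Longrightarrow> \<bar>F x\<bar> \<le> B"
  shows "\<bar>measure_pmf.expectation p F\<bar> \<le> B"
proof -
  have "\<bar>measure_pmf.expectation p F\<bar> \<le> measure_pmf.expectation p (\<lambda>x. \<bar>F x\<bar>)"
    by (rule integral_abs_bound)
  also have "\<dots> \<le> B"
    using assms
    by (intro measure_pmf.integral_le_const integrable_measure_pmf_bounded[where B = B])
       (auto simp: AE_measure_pmf_iff)
  finally show ?thesis .
qed

lemma set_Pi_pmf_subset_PiE_dflt:
  assumes "finite I" "\<And>i. i \<in> I \<Longrightarrow> set_pmf (p i) \<subseteq> Y"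
  shows "set_pmf (Pi_pmf I dflt p) \<subseteq> PiE_dflt I dflt (\<lambda>_. Y)"
  using set_Pi_pmf_subset'[OF assms(1), of dflt p] assms(2) by (fastforce simp: PiE_dflt_def)

lemma expectation_Pi_pmf_component:
  fixes \<psi> :: "'b \<Rightarrow> real"
  assumes "finite I" "i \<in> I"
  shows "measure_pmf.expectation (Pi_pmf I dflt p) (\<lambda>f. \<psi> (f i)) = measure_pmf.expectation (p i) \<psi>"
proof -
  have "measure_pmf.expectation (Pi_pmf I dflt p) (\<lambda>f. \<psi> (f i))
      = measure_pmf.expectation (map_pmf (\<lambda>f. f i) (Pi_pmf I dflt p)) \<psi>"
    by simp
  also have "map_pmf (\<lambda>f. f i) (Pi_pmf I dflt p) = p i"
    using Pi_pmf_component[OF assms(1), of i dflt p] assms(2) by simp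
  finally show ?thesis .
qed

lemma expectation_Pi_pmf_insert:
  fixes \<phi> :: "('k \<Rightarrow> 'b) \<Rightarrow> real"
  assumes "finite I" "i \<notin> I" "finite Y" "\<And>j. j \<in> insert i I \<Longrightarrow> set_pmf (p j) \<subseteq> Y"
  shows "measure_pmf.expectation (Pi_pmf (insert i I) dflt p) \<phi> =
         (\<Sum>y\<in>Y. pmf (p i) y * measure_pmf.expectation (Pi_pmf I dflt p) (\<lambda>f. \<phi> (f(i := y))))"
proof -
  have "finite (set_pmf (Pi_pmf I dflt p))"
    by (rule finite_subset[OF set_Pi_pmf_subset_PiE_dflt[of I p Y]]) (use assms in auto)
  then have "measure_pmf.expectation (p i \<bind> (\<lambda>y. map_pmf (\<lambda>f. f(i := y)) (Pi_pmf I dflt p))) \<phi>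
      = (\<Sum>y\<in>Y. pmf (p i) y *\<^sub>R measure_pmf.expectation (map_pmf (\<lambda>f. f(i := y)) (Pi_pmf I dflt p)) \<phi>)"
    using assms(3,4) by (intro pmf_expectation_bind) auto
  moreover have "Pi_pmf (insert i I) dflt p = p i \<bind> (\<lambda>y. map_pmf (\<lambda>f. f(i := y)) (Pi_pmf I dflt p))"
    using Pi_pmf_insert'[OF assms(1,2)] by (simp add: map_pmf_def)
  ultimately show ?thesis
    by simp
qed

lemma sum_pmf_mult_diff_le:
  assumes "finite Y" "set_pmf q \<subseteq> Y"
    and "\<And>y. y \<in> Y \<Longrightarrow> \<bar>G y\<bar> \<le> B" and "\<And>y. y \<in> Y \<Longrightarrow> G y - H y \<le> D"
  shows "(\<Sum>y\<in>Y. pmf p y * G y) - (\<Sum>y\<in>Y. pmf q y * H y)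
     \<le> B * (\<Sum>y\<in>Y. \<bar>pmf p y - pmf q y\<bar>) + D"
proof -
  have "(\<Sum>y\<in>Y. pmf p y * G y) - (\<Sum>y\<in>Y. pmf q y * H y)
      = (\<Sum>y\<in>Y. (pmf p y - pmf q y) * G y) + (\<Sum>y\<in>Y. pmf q y * (G y - H y))"
    by (simp add: sum_subtractf[symmetric] sum.distrib[symmetric] algebra_simps)
  also have "\<dots> \<le> (\<Sum>y\<in>Y. B * \<bar>pmf p y - pmf q y\<bar>) + (\<Sum>y\<in>Y. pmf q y * D)"
  proof (intro add_mono sum_mono)
    fix y assume y: "y \<in> Y"
    have "(pmf p y - pmf q y) * G y \<le> \<bar>pmf p y - pmf q y\<bar> * \<bar>G y\<bar>"
      by (metis abs_ge_self abs_mult)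
    also have "\<dots> \<le> B * \<bar>pmf p y - pmf q y\<bar>"
      using assms(3)[OF y] by (simp add: mult.commute mult_right_mono)
    finally show "(pmf p y - pmf q y) * G y \<le> B * \<bar>pmf p y - pmf q y\<bar>" .
    show "pmf q y * (G y - H y) \<le> pmf q y * D"
      by (intro mult_left_mono assms(4) y) simp
  qed
  also have "(\<Sum>y\<in>Y. pmf q y * D) = D"
    using sum_pmf_eq_1[OF assms(1,2)] by (simp add: sum_distrib_right[symmetric])
  finally show ?thesis
    by (simp add: sum_distrib_left)
qed

text \<open>The hybrid argument: replace the factors of a product measure one at a time.\<close>
lemma expectation_Pi_pmf_diff_le:
  fixes \<phi> :: "('k \<Rightarrow> 'b) \<Rightarrow> real"
  assumes "finite I" "finite Y"
    and "\<And>i. i \<in> I \<Longrightarrow> set_pmf (p i) \<subseteq> Y \<and> set_pmf (q i) \<subseteq> Y"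
    and "\<And>f. f \<in> PiE_dflt I dflt (\<lambda>_. Y) \<Longrightarrow> \<bar>\<phi> f\<bar> \<le> B"
  shows "measure_pmf.expectation (Pi_pmf I dflt p) \<phi> - measure_pmf.expectation (Pi_pmf I dflt q) \<phi>
     \<le> B * (\<Sum>i\<in>I. \<Sum>y\<in>Y. \<bar>pmf (p i) y - pmf (q i) y\<bar>)"
  using assms(1,3,4)
proof (induction I arbitrary: \<phi> rule: finite_induct)
  case empty
  then show ?case by simp
next
  case (insert i I)
  define Gp where "Gp y = measure_pmf.expectation (Pi_pmf I dflt p) (\<lambda>f. \<phi> (f(i := y)))" for y
  define Gq where "Gq y = measure_pmf.expectation (Pi_pmf I dflt q) (\<lambda>f. \<phi> (f(i := y)))" for y
  have upd: "\<bar>\<phi> (f(i := y))\<bar> \<le> B" if "f \<in> PiE_dflt I dflt (\<lambda>_. Y)" "y \<in> Y" for f y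
    using that insert.hyps(2) by (intro insert.prems(2)) (auto simp: PiE_dflt_def)
  have "\<bar>Gp y\<bar> \<le> B" if "y \<in> Y" for y
    unfolding Gp_def
  proof (rule abs_expectation_pmf_le)
    fix f assume "f \<in> set_pmf (Pi_pmf I dflt p)"
    then have "f \<in> PiE_dflt I dflt (\<lambda>_. Y)"
      using set_Pi_pmf_subset_PiE_dflt[of I p Y dflt] insert.hyps(1) insert.prems(1) by blast
    then show "\<bar>\<phi> (f(i := y))\<bar> \<le> B" using upd that by blast
  qed
  moreover have "Gp y - Gq y \<le> B * (\<Sum>i\<in>I. \<Sum>y\<in>Y. \<bar>pmf (p i) y - pmf (q i) y\<bar>)" if "y \<in> Y" for y
    unfolding Gp_def Gq_def
  proof (rule insert.IH)
    show "\<And>f. f \<in> PiE_dflt I dflt (\<lambda>_. Y) \<Longrightarrow> \<bar>\<phi> (f(i := y))\<bar> \<le> B"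
      by (rule upd[OF _ that])
  qed (use insert.prems(1) in simp)
  ultimately have "(\<Sum>y\<in>Y. pmf (p i) y * Gp y) - (\<Sum>y\<in>Y. pmf (q i) y * Gq y)
      \<le> B * (\<Sum>y\<in>Y. \<bar>pmf (p i) y - pmf (q i) y\<bar>) + B * (\<Sum>i\<in>I. \<Sum>y\<in>Y. \<bar>pmf (p i) y - pmf (q i) y\<bar>)"
    using assms(2) insert.prems(1) by (intro sum_pmf_mult_diff_le) auto
  moreover have "measure_pmf.expectation (Pi_pmf (insert i I) dflt p) \<phi> = (\<Sum>y\<in>Y. pmf (p i) y * Gp y)"
    and "measure_pmf.expectation (Pi_pmf (insert i I) dflt q) \<phi> = (\<Sum>y\<in>Y. pmf (q i) y * Gq y)"
    unfolding Gp_def Gq_def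
    by (rule expectation_Pi_pmf_insert; use insert.hyps insert.prems(1) assms(2) in auto)+
  ultimately show ?case
    using insert.hyps by (simp add: distrib_left)
qed

lemma sqrt_sum_squares_le:
  fixes f :: "nat \<Rightarrow> real"
  assumes "\<And>n. n < k \<Longrightarrow> \<bar>f n\<bar> \<le> B"
  shows "sqrt (\<Sum>n<k. (f n)\<^sup>2) \<le> sqrt (real k) * B"
proof (cases "k = 0")
  case False
  then have "0 \<le> B" using assms[of 0] by auto
  have "(f n)\<^sup>2 \<le> B\<^sup>2" if "n < k" for n
    using abs_le_square_iff[of "f n" B] assms[OF that] \<open>0 \<le> B\<close> by simp
  then have "(\<Sum>n<k. (f n)\<^sup>2) \<le> (\<Sum>n<k. B\<^sup>2)"
    by (intro sum_mono) simp
  then have "sqrt (\<Sum>n<k. (f n)\<^sup>2) \<le> sqrt (real k * B\<^sup>2)" by simp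
  also have "\<dots> = sqrt (real k) * B"
    using \<open>0 \<le> B\<close> by (simp add: real_sqrt_mult)
  finally show ?thesis .
qed simp

lemma beta_factorization_sum:
  fixes u v :: "model \<Rightarrow> 'j \<Rightarrow> real"
  assumes "finite J"
    and "\<And>M M'. M \<in> Ms \<Longrightarrow> M' \<in> Ms \<Longrightarrow> A M M' = (\<Sum>j\<in>J. u M j * v M' j)"
    and "\<And>M j. j \<in> J \<Longrightarrow> \<bar>u M j\<bar> \<le> a" and "\<And>M j. j \<in> J \<Longrightarrow> \<bar>v M j\<bar> \<le> b"
  shows "beta_factorization A Ms (card J) (real (card J) * a * b)"
proof -
  let ?k = "card J"
  obtain e where e: "bij_betw e {..<?k} J"
    using ex_bij_betw_nat_finite[OF assms(1)] by (auto simp: atLeast0LessThan)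
  have e_in: "e n \<in> J" if "n < ?k" for n
    using e that by (auto simp: bij_betw_def)
  have "sqrt (\<Sum>n<?k. (u M (e n))\<^sup>2) * sqrt (\<Sum>n<?k. (v M' (e n))\<^sup>2) \<le> real ?k * a * b" for M M'
  proof -
    have "sqrt (\<Sum>n<?k. (u M (e n))\<^sup>2) * sqrt (\<Sum>n<?k. (v M' (e n))\<^sup>2)
        \<le> (sqrt (real ?k) * a) * (sqrt (real ?k) * b)"
    proof (rule mult_mono)
      have "0 \<le> a" if "0 < ?k"
        using assms(3)[OF e_in[OF that]] abs_ge_zero order_trans by metis
      then show "0 \<le> sqrt (real ?k) * a"
        by (cases "?k = 0") simp_all
    qed (use assms(3,4) e_in in \<open>auto intro: sqrt_sum_squares_le sum_nonneg\<close>)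
    then show ?thesis by (simp add: mult_ac)
  qed
  moreover have "A M M' = (\<Sum>n<?k. u M (e n) * v M' (e n))" if "M \<in> Ms" "M' \<in> Ms" for M M'
    using assms(2)[OF that] sum.reindex_bij_betw[OF e, of "\<lambda>j. u M j * v M' j"] by simp
  ultimately show ?thesis
    unfolding beta_factorization_def
    by (intro exI[of _ "\<lambda>M n. u M (e n)"] exI[of _ "\<lambda>M n. v M (e n)"]) auto
qed

lemma valid_settingD:
  assumes "valid_setting E"
  shows "finite (Obs E)" "Obs E \<noteq> {}" "finite (Act E)" "Act E \<noteq> {}"
    and "\<And>i. i < nfeat E \<Longrightarrow> pa E i \<subseteq> {..<nfeat E}" and "set_pmf (init E) \<subseteq> states E"
    and "\<And>h x a. set_pmf (Rew E h x a) \<subseteq> {0..1}"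
  using assms unfolding valid_setting_def by auto

lemma finite_states: "valid_setting E \<Longrightarrow> finite (states E)"
  unfolding states_def by (intro finite_PiE) (auto dest: valid_settingD(1))

lemma states_nonempty: "valid_setting E \<Longrightarrow> states E \<noteq> {}"
  unfolding states_def using valid_settingD(2) by (simp add: PiE_eq_empty_iff)

lemma restrict_state_in_PiE:
  assumes "valid_setting E" "i < nfeat E" "x \<in> states E"
  shows "restrict x (pa E i) \<in> PiE (pa E i) (\<lambda>_. Obs E)"
  using assms valid_settingD(5)[OF assms(1,2)] unfolding states_def by (auto simp: PiE_def Pi_def)

lemma set_pmf_trans_subset:
  assumes "M \<in> models E"
  shows "set_pmf (trans E M h x a) \<subseteq> states E"
proof -
  have "set_pmf (trans E M h x a) \<subseteq> PiE_dflt {..<nfeat E} undefined (\<lambda>_. Obs E)"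
    unfolding trans_def using assms by (intro set_Pi_pmf_subset_PiE_dflt) (auto simp: models_def)
  also have "PiE_dflt {..<nfeat E} undefined (\<lambda>_. Obs E) = states E"
    by (auto simp: states_def PiE_dflt_def PiE_def extensional_def Pi_def)
  finally show ?thesis .
qed

lemma finite_set_pmf_trans:
  "valid_setting E \<Longrightarrow> M \<in> models E \<Longrightarrow> finite (set_pmf (trans E M h x a))"
  using finite_subset[OF set_pmf_trans_subset finite_states] by blast

lemma set_pmf_roll_subset:
  assumes "valid_setting E" "Ms \<in> models E"
  shows "set_pmf (roll E Ms \<pi> h) \<subseteq> states E"
proof (induction h)
  case (Suc h)
  then show ?case
    using valid_settingD(6)[OF assms(1)] set_pmf_trans_subset[OF assms(2)] by (simp; blast)
qed (use valid_settingD(6)[OF assms(1)] in simp)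

lemma finite_set_pmf_roll:
  "valid_setting E \<Longrightarrow> Ms \<in> models E \<Longrightarrow> finite (set_pmf (roll E Ms \<pi> h))"
  using finite_subset[OF set_pmf_roll_subset finite_states] by blast

lemma integrable_Rew:
  "valid_setting E \<Longrightarrow> integrable (measure_pmf (Rew E h x a)) (\<lambda>r. r)"
  using valid_settingD(7) by (intro integrable_measure_pmf_bounded[where B = 1]) fastforce

lemma Er_nonneg: "valid_setting E \<Longrightarrow> 0 \<le> Er E h x a"
  unfolding Er_def using valid_settingD(7)
  by (intro integral_nonneg_AE) (fastforce simp: AE_measure_pmf_iff)

lemma Estep_reward_plus:
  assumes "valid_setting E" "M \<in> models E"
  shows "Estep E M h x a (\<lambda>h x a r x'. r + W h x') =
         Er E h x a + measure_pmf.expectation (trans E M h x a) (W h)"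
proof -
  have "integrable (measure_pmf (trans E M h x a)) (W h)"
    using finite_set_pmf_trans[OF assms] by (rule integrable_measure_pmf_finite)
  then have "Estep E M h x a (\<lambda>h x a r x'. r + W h x') =
      measure_pmf.expectation (Rew E h x a) (\<lambda>r. r + measure_pmf.expectation (trans E M h x a) (W h))"
    unfolding Estep_def by (simp add: Bochner_Integration.integral_add)
  also have "\<dots> = Er E h x a + measure_pmf.expectation (trans E M h x a) (W h)"
    unfolding Er_def using integrable_Rew[OF assms(1)] by (simp add: Bochner_Integration.integral_add)
  finally show ?thesis .
qed

lemma pol_in_Act:
  assumes "valid_setting E"
  shows "pol E M h x \<in> Act E"
proof -
  let ?Q = "Q E M h x"
  have "Max (?Q ` Act E) \<in> ?Q ` Act E"
    using valid_settingD(3,4)[OF assms] by (intro Max_in) auto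
  then obtain a where "a \<in> Act E" "?Q a = Max (?Q ` Act E)"
    by auto
  moreover have "\<forall>b\<in>Act E. ?Q b \<le> Max (?Q ` Act E)"
    using valid_settingD(3)[OF assms] by simp
  ultimately have "a \<in> Act E" "\<forall>b\<in>Act E. ?Q b \<le> ?Q a"
    by simp_all
  then show ?thesis
    unfolding pol_def by (rule LeastI2_ex[OF exI, OF conjI]) auto
qed

lemma Vn_nonneg:
  assumes "valid_setting E"
  shows "0 \<le> Vn E M n x"
proof (induction n arbitrary: x)
  case (Suc n)
  obtain a where a: "a \<in> Act E" using valid_settingD(4)[OF assms] by blast
  have "0 \<le> Er E (Hor E - n) x a + measure_pmf.expectation (trans E M (Hor E - n) x a) (Vn E M n)"
    using Er_nonneg[OF assms] Suc.IH by (intro add_nonneg_nonneg integral_nonneg_AE) auto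
  also have "\<dots> \<le> Vn E M (Suc n) x"
    unfolding Vn.simps using a valid_settingD(3)[OF assms] by (intro Max_ge) auto
  finally show ?case .
qed simp

definition feasible_prefix :: "fsetting \<Rightarrow> nat \<Rightarrow> (nat \<Rightarrow> state) \<Rightarrow> (nat \<Rightarrow> nat) \<Rightarrow> (nat \<Rightarrow> real) \<Rightarrow> bool" where
  "feasible_prefix E t xs as rs \<longleftrightarrow>
     (\<forall>s\<in>{1..t}. xs s \<in> states E \<and> as s \<in> Act E \<and> rs s \<in> set_pmf (Rew E s (xs s) (as s)))"

lemma feasible_prefix_extend:
  assumes "feasible_prefix E (t - 1) xs as rs" "1 \<le> t"
    and "x \<in> states E" "a \<in> Act E" "r \<in> set_pmf (Rew E t x a)"
  shows "feasible_prefix E t (xs(t := x)) (as(t := a)) (rs(t := r))"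
    and "(\<Sum>s=1..t. (rs(t := r)) s) = (\<Sum>s=1..t - 1. rs s) + r"
proof -
  obtain m where t: "t = Suc m" using assms(2) by (cases t) auto
  show "feasible_prefix E t (xs(t := x)) (as(t := a)) (rs(t := r))"
    using assms(1,3-5) unfolding feasible_prefix_def t by (auto simp: le_Suc_eq)
  have "(\<Sum>s=1..m. (rs(t := r)) s) = (\<Sum>s=1..m. rs s)"
    unfolding t by (intro sum.cong) auto
  then show "(\<Sum>s=1..t. (rs(t := r)) s) = (\<Sum>s=1..t - 1. rs s) + r"
    unfolding t by simp
qed

lemma Er_plus_expectation_le:
  assumes "valid_setting E" "M \<in> models E"
    and "\<And>r x'. r \<in> set_pmf (Rew E h x a) \<Longrightarrow> x' \<in> set_pmf (trans E M h x a) \<Longrightarrow> r + W x' \<le> c"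
  shows "Er E h x a + measure_pmf.expectation (trans E M h x a) W \<le> c"
proof -
  have "r + measure_pmf.expectation (trans E M h x a) W \<le> c" if r: "r \<in> set_pmf (Rew E h x a)" for r
  proof -
    have "W x' \<le> c - r" if "x' \<in> set_pmf (trans E M h x a)" for x'
      using assms(3)[OF r that] by simp
    then have "measure_pmf.expectation (trans E M h x a) W \<le> c - r"
      using finite_set_pmf_trans[OF assms(1,2)]
      by (intro measure_pmf.integral_le_const integrable_measure_pmf_finite)
         (auto simp: AE_measure_pmf_iff)
    then show ?thesis by simp
  qed
  then have "measure_pmf.expectation (Rew E h x a) (\<lambda>r. r + measure_pmf.expectation (trans E M h x a) W) \<le> c"
    using integrable_Rew[OF assms(1)]
    by (intro measure_pmf.integral_le_const) (auto simp: AE_measure_pmf_iff)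
  then show ?thesis
    unfolding Er_def using integrable_Rew[OF assms(1)] by (simp add: Bochner_Integration.integral_add)
qed

text \<open>The reward bound of a valid setting is pathwise, so the bound on the optimal value has to be
  carried along every feasible history.\<close>
lemma Vn_le_remaining_reward:
  assumes "valid_setting E" "M \<in> models E"
    and "n \<le> Hor E" "x \<in> states E" "feasible_prefix E (Hor E - n) xs as rs"
  shows "Vn E M n x \<le> 1 - (\<Sum>s=1..Hor E - n. rs s)"
  using assms(3-5)
proof (induction n arbitrary: x xs as rs)
  case 0
  then show ?case
    using assms(1) unfolding valid_setting_def feasible_prefix_def by auto
next
  case (Suc n)
  define t where "t = Hor E - n"
  have t: "1 \<le> t" "Hor E - Suc n = t - 1"
    using Suc.prems(1) by (auto simp: t_def)
  have "Er E t x a + measure_pmf.expectation (trans E M t x a) (Vn E M n) \<le> 1 - (\<Sum>s=1..t - 1. rs s)"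
    if a: "a \<in> Act E" for a
  proof (rule Er_plus_expectation_le[OF assms(1,2)])
    fix r x' assume r: "r \<in> set_pmf (Rew E t x a)" and x': "x' \<in> set_pmf (trans E M t x a)"
    have "x' \<in> states E"
      using x' set_pmf_trans_subset[OF assms(2)] by blast
    moreover note feasible_prefix_extend[OF Suc.prems(3)[unfolded t(2)] t(1) Suc.prems(2) a r]
    ultimately show "r + Vn E M n x' \<le> 1 - (\<Sum>s=1..t - 1. rs s)"
      using Suc.IH[of x' "xs(t := x)" "as(t := a)" "rs(t := r)", folded t_def] Suc.prems(1)
      by (simp del: fun_upd_apply)
  qed
  then show ?case
    unfolding Vn.simps t_def[symmetric] t(2) using valid_settingD(3,4)[OF assms(1)] by simp
qed

lemma abs_V_Suc_le_1:
  assumes "valid_setting E" "M \<in> models E" "x \<in> states E"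
  shows "\<bar>V E M (Suc h) x\<bar> \<le> 1"
proof -
  obtain x0 a0 where x0: "x0 \<in> states E" and a0: "a0 \<in> Act E"
    using states_nonempty[OF assms(1)] valid_settingD(4)[OF assms(1)] by blast
  define rs where "rs s = (SOME r. r \<in> set_pmf (Rew E s x0 a0))" for s
  have rs: "rs s \<in> set_pmf (Rew E s x0 a0)" for s
    unfolding rs_def using set_pmf_not_empty by (metis ex_in_conv someI_ex)
  let ?n = "Hor E - h"
  have "Vn E M ?n x \<le> 1 - (\<Sum>s=1..Hor E - ?n. rs s)"
    using x0 a0 rs assms by (intro Vn_le_remaining_reward) (auto simp: feasible_prefix_def)
  moreover have "0 \<le> (\<Sum>s=1..Hor E - ?n. rs s)"
    using rs valid_settingD(7)[OF assms(1)] by (intro sum_nonneg) fastforce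
  moreover have "V E M (Suc h) x = Vn E M ?n x"
    unfolding V_def by simp
  ultimately show ?thesis
    using Vn_nonneg[OF assms(1)] by (simp add: abs_le_iff)
qed

definition factor_dist :: "fsetting \<Rightarrow> model \<Rightarrow> model \<Rightarrow> nat \<Rightarrow> nat \<Rightarrow> state \<Rightarrow> nat \<Rightarrow> real" where
  "factor_dist E Ms M' h i z a = (\<Sum>y\<in>Obs E. \<bar>pmf (M' h i z a) y - pmf (Ms h i z a) y\<bar>)"

definition misfit_matrix :: "fsetting \<Rightarrow> model \<Rightarrow> nat \<Rightarrow> model \<Rightarrow> model \<Rightarrow> real" where
  "misfit_matrix E Ms h M M' = measure_pmf.expectation (roll E Ms (pol E M) h)
     (\<lambda>x. measure_pmf.expectation (pmf_of_set (Act E))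
        (\<lambda>a. \<Sum>i<nfeat E. factor_dist E Ms M' h i (restrict x (pa E i)) a))"

lemma factor_dist_nonneg: "0 \<le> factor_dist E Ms M' h i z a"
  unfolding factor_dist_def by (intro sum_nonneg) simp

lemma factor_dist_le_card: "factor_dist E Ms M' h i z a \<le> real (card (Obs E))"
proof -
  have "\<bar>pmf (M' h i z a) y - pmf (Ms h i z a) y\<bar> \<le> 1" for y
    unfolding abs_le_iff using pmf_le_1[of "M' h i z a" y] pmf_le_1[of "Ms h i z a" y]
      pmf_nonneg[of "M' h i z a" y] pmf_nonneg[of "Ms h i z a" y] by linarith
  then have "factor_dist E Ms M' h i z a \<le> (\<Sum>y\<in>Obs E. 1)"
    unfolding factor_dist_def by (intro sum_mono)
  then show ?thesis by simp
qed

lemma bellman_step_le_factor_dist: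
  assumes "valid_setting E" "Ms \<in> models E" "M' \<in> models E"
  shows "(let g = (\<lambda>h x a r x'. r + V E M' (h + 1) x') in Estep E M' h x a g - Estep E Ms h x a g)
     \<le> (\<Sum>i<nfeat E. factor_dist E Ms M' h i (restrict x (pa E i)) a)"
proof -
  have "(let g = (\<lambda>h x a r x'. r + V E M' (h + 1) x') in Estep E M' h x a g - Estep E Ms h x a g)
      = measure_pmf.expectation (trans E M' h x a) (V E M' (Suc h))
        - measure_pmf.expectation (trans E Ms h x a) (V E M' (Suc h))"
    using Estep_reward_plus[OF assms(1,3), of h x a "\<lambda>h. V E M' (Suc h)"]
      Estep_reward_plus[OF assms(1,2), of h x a "\<lambda>h. V E M' (Suc h)"]
    by simp
  also have "\<dots> \<le> 1 * (\<Sum>i<nfeat E. factor_dist E Ms M' h i (restrict x (pa E i)) a)"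
    unfolding trans_def factor_dist_def
  proof (rule expectation_Pi_pmf_diff_le)
    show "finite (Obs E)" using valid_settingD(1)[OF assms(1)] .
    show "set_pmf (M' h i (restrict x (pa E i)) a) \<subseteq> Obs E \<and> set_pmf (Ms h i (restrict x (pa E i)) a) \<subseteq> Obs E"
      for i using assms(2,3) by (auto simp: models_def)
    show "\<bar>V E M' (Suc h) f\<bar> \<le> 1" if "f \<in> PiE_dflt {..<nfeat E} undefined (\<lambda>_. Obs E)" for f
      using abs_V_Suc_le_1[OF assms(1,3)] that
      by (simp add: states_def PiE_dflt_def PiE_def extensional_def Pi_def)
  qed simp
  finally show ?thesis by simp
qed

lemma bellman_err_le_misfit_matrix:
  assumes "valid_setting E" "Ms \<in> models E" "M' \<in> models E"
  shows "1 / real (card (Act E)) * bellman_err E Ms M M' h \<le> misfit_matrix E Ms h M M'"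
proof -
  let ?F = "\<lambda>x. let a = pol E M' h x; g = (\<lambda>h x a r x'. r + V E M' (h + 1) x')
          in Estep E M' h x a g - Estep E Ms h x a g"
  let ?D = "\<lambda>x a. \<Sum>i<nfeat E. factor_dist E Ms M' h i (restrict x (pa E i)) a"
  have fin: "finite (Act E)" "Act E \<noteq> {}"
    using valid_settingD(3,4)[OF assms(1)] by auto
  have "1 / real (card (Act E)) * ?F x \<le> measure_pmf.expectation (pmf_of_set (Act E)) (?D x)" for x
  proof -
    have "?F x \<le> ?D x (pol E M' h x)"
      using bellman_step_le_factor_dist[OF assms] by (simp add: Let_def)
    also have "\<dots> \<le> (\<Sum>a\<in>Act E. ?D x a)"
      using pol_in_Act[OF assms(1)] fin by (intro member_le_sum sum_nonneg factor_dist_nonneg)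
    finally show ?thesis
      using fin by (simp add: integral_pmf_of_set divide_right_mono)
  qed
  then have "measure_pmf.expectation (roll E Ms (pol E M) h) (\<lambda>x. 1 / real (card (Act E)) * ?F x)
      \<le> misfit_matrix E Ms h M M'"
    unfolding misfit_matrix_def using finite_set_pmf_roll[OF assms(1,2)]
    by (intro integral_mono integrable_measure_pmf_finite)
  then show ?thesis
    unfolding bellman_err_def by simp
qed

definition factor_sign :: "model \<Rightarrow> model \<Rightarrow> nat \<Rightarrow> nat \<Rightarrow> state \<Rightarrow> nat \<Rightarrow> nat \<Rightarrow> real" where
  "factor_sign Ms M' h i z a y = (if pmf (Ms h i z a) y \<le> pmf (M' h i z a) y then 1 else -1)"

definition sign_discriminator :: "fsetting \<Rightarrow> model \<Rightarrow> model \<Rightarrow> nat \<Rightarrow> state \<Rightarrow> nat \<Rightarrow> real \<Rightarrow> state \<Rightarrow> real" where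
  "sign_discriminator E Ms M' h x a r x' =
     (\<Sum>i<nfeat E. factor_sign Ms M' h i (restrict x (pa E i)) a (x' i))"

lemma sign_discriminator_in_Fcls: "sign_discriminator E Ms M' \<in> Fcls E"
proof -
  define g where "g i h x a (r :: real) (x' :: state) = factor_sign Ms M' h i (restrict x (pa E i)) a (x' i)"
    for i h x a r x'
  have "g i \<in> Gcls E i" for i
    unfolding Gcls_def g_def
    by (intro CollectI conjI allI exI[of _ "\<lambda>z a h y. factor_sign Ms M' h i z a y"])
       (simp_all add: factor_sign_def)
  moreover have "sign_discriminator E Ms M' = (\<lambda>h x a r x'. \<Sum>i<nfeat E. g i h x a r x')"
    unfolding sign_discriminator_def g_def by (intro ext) simp
  ultimately show ?thesis
    unfolding Fcls_def by blast
qed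

lemma Estep_sum_coordinates:
  fixes g :: "nat \<Rightarrow> nat \<Rightarrow> real"
  assumes "valid_setting E" "M \<in> models E"
  shows "Estep E M h x a (\<lambda>_ _ _ _ x'. \<Sum>i<nfeat E. g i (x' i))
       = (\<Sum>i<nfeat E. \<Sum>y\<in>Obs E. g i y * pmf (M h i (restrict x (pa E i)) a) y)"
proof -
  have "measure_pmf.expectation (trans E M h x a) (\<lambda>x'. g i (x' i))
      = (\<Sum>y\<in>Obs E. g i y * pmf (M h i (restrict x (pa E i)) a) y)" if "i < nfeat E" for i
  proof -
    have "measure_pmf.expectation (trans E M h x a) (\<lambda>x'. g i (x' i))
        = measure_pmf.expectation (M h i (restrict x (pa E i)) a) (g i)"
      unfolding trans_def using that by (intro expectation_Pi_pmf_component) auto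
    also have "\<dots> = (\<Sum>y\<in>Obs E. g i y * pmf (M h i (restrict x (pa E i)) a) y)"
    proof (rule integral_measure_pmf_real)
      show "finite (Obs E)" using valid_settingD(1)[OF assms(1)] .
      show "y \<in> Obs E" if "y \<in> set_pmf (M h i (restrict x (pa E i)) a)" for y
        using assms(2) that unfolding models_def by blast
    qed
    finally show ?thesis .
  qed
  moreover have "measure_pmf.expectation (trans E M h x a) (\<lambda>x'. \<Sum>i<nfeat E. g i (x' i))
      = (\<Sum>i<nfeat E. measure_pmf.expectation (trans E M h x a) (\<lambda>x'. g i (x' i)))"
    using finite_set_pmf_trans[OF assms]
    by (intro Bochner_Integration.integral_sum integrable_measure_pmf_finite)
  ultimately show ?thesis
    unfolding Estep_def by simp
qed

lemma Estep_sign_discriminator_diff: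
  assumes "valid_setting E" "Ms \<in> models E" "M' \<in> models E"
  shows "Estep E M' h x a (sign_discriminator E Ms M') - Estep E Ms h x a (sign_discriminator E Ms M')
       = (\<Sum>i<nfeat E. factor_dist E Ms M' h i (restrict x (pa E i)) a)"
proof -
  let ?s = "\<lambda>i. factor_sign Ms M' h i (restrict x (pa E i)) a"
  let ?q = "\<lambda>M i. pmf (M h i (restrict x (pa E i)) a)"
  have "Estep E M h x a (sign_discriminator E Ms M') = Estep E M h x a (\<lambda>_ _ _ _ x'. \<Sum>i<nfeat E. ?s i (x' i))"
    for M unfolding Estep_def sign_discriminator_def ..
  then have "Estep E M' h x a (sign_discriminator E Ms M') - Estep E Ms h x a (sign_discriminator E Ms M')
      = (\<Sum>i<nfeat E. \<Sum>y\<in>Obs E. ?s i y * ?q M' i y) - (\<Sum>i<nfeat E. \<Sum>y\<in>Obs E. ?s i y * ?q Ms i y)"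
    by (simp add: Estep_sum_coordinates[OF assms(1,3), where g = ?s]
        Estep_sum_coordinates[OF assms(1,2), where g = ?s])
  also have "\<dots> = (\<Sum>i<nfeat E. \<Sum>y\<in>Obs E. ?s i y * (?q M' i y - ?q Ms i y))"
    by (simp add: sum_subtractf right_diff_distrib)
  also have "\<dots> = (\<Sum>i<nfeat E. factor_dist E Ms M' h i (restrict x (pa E i)) a)"
    unfolding factor_dist_def factor_sign_def by (intro sum.cong refl) auto
  finally show ?thesis .
qed

lemma abs_Fcls_le:
  assumes "f \<in> Fcls E"
  shows "\<bar>f h x a r x'\<bar> \<le> real (nfeat E)"
proof -
  obtain g where g: "\<forall>i<nfeat E. g i \<in> Gcls E i" "f = (\<lambda>h x a r x'. \<Sum>i<nfeat E. g i h x a r x')"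
    using assms unfolding Fcls_def by blast
  have "\<bar>g i h x a r x'\<bar> \<le> 1" if "i < nfeat E" for i
  proof -
    have "g i h x a r x' \<in> {-1, 1}"
      using g(1) that unfolding Gcls_def by blast
    then show ?thesis by auto
  qed
  then have "(\<Sum>i<nfeat E. \<bar>g i h x a r x'\<bar>) \<le> (\<Sum>i<nfeat E. 1)"
    by (intro sum_mono) simp
  then show ?thesis
    unfolding g(2) using order_trans[OF sum_abs[of "\<lambda>i. g i h x a r x'" "{..<nfeat E}"]]
    by simp
qed

lemma misfit_matrix_le_witness_misfit:
  assumes "valid_setting E" "Ms \<in> models E" "M' \<in> models E"
  shows "misfit_matrix E Ms h M M' \<le> witness_misfit E Ms M M' h"
proof -
  let ?val = "\<lambda>f. measure_pmf.expectation (roll E Ms (pol E M) h)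
     (\<lambda>x. measure_pmf.expectation (pmf_of_set (Act E))
        (\<lambda>a. Estep E M' h x a f - Estep E Ms h x a f))"
  have "bdd_above (?val ` Fcls E)"
  proof (rule bdd_aboveI2)
    fix f assume f: "f \<in> Fcls E"
    have bound: "\<bar>Estep E M h x a f\<bar> \<le> real (nfeat E)" for M x a
      unfolding Estep_def using abs_Fcls_le[OF f] by (intro abs_expectation_pmf_le) auto
    have diff_bound: "\<bar>Estep E M' h x a f - Estep E Ms h x a f\<bar> \<le> 2 * real (nfeat E)" for x a
      using abs_triangle_ineq4[of "Estep E M' h x a f" "Estep E Ms h x a f"] bound[of M' x a]
        bound[of Ms x a] by linarith
    then have "\<bar>?val f\<bar> \<le> 2 * real (nfeat E)"
      by (intro abs_expectation_pmf_le diff_bound)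
    then show "?val f \<le> 2 * real (nfeat E)" by simp
  qed
  then have "?val (sign_discriminator E Ms M') \<le> (SUP f\<in>Fcls E. ?val f)"
    by (intro cSUP_upper sign_discriminator_in_Fcls)
  then show ?thesis
    unfolding witness_misfit_def misfit_matrix_def Estep_sign_discriminator_diff[OF assms] .
qed

definition parent_index :: "fsetting \<Rightarrow> (nat \<times> state \<times> nat) set" where
  "parent_index E = (SIGMA i:{..<nfeat E}. PiE (pa E i) (\<lambda>_. Obs E) \<times> Act E)"

lemma finite_parent_values:
  assumes "valid_setting E" "i < nfeat E"
  shows "finite (PiE (pa E i) (\<lambda>_. Obs E))"
  using finite_subset[OF valid_settingD(5)[OF assms]] valid_settingD(1)[OF assms(1)]
  by (intro finite_PiE) auto

lemma finite_parent_index: "valid_setting E \<Longrightarrow> finite (parent_index E)"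
  unfolding parent_index_def using finite_parent_values valid_settingD(3) by blast

lemma card_parent_index:
  assumes "valid_setting E"
  shows "card (parent_index E) * card (Obs E) = Lh E"
proof -
  have "card (parent_index E) = (\<Sum>i<nfeat E. card (PiE (pa E i) (\<lambda>_. Obs E) \<times> Act E))"
    unfolding parent_index_def using finite_parent_values[OF assms] valid_settingD(3)[OF assms]
    by simp
  also have "\<dots> = (\<Sum>i<nfeat E. card (Obs E) ^ card (pa E i) * card (Act E))"
    using finite_subset[OF valid_settingD(5)[OF assms]]
    by (intro sum.cong refl) (simp add: card_cartesian_product card_PiE)
  finally have "card (parent_index E) * card (Obs E)
      = (\<Sum>i<nfeat E. card (Obs E) ^ card (pa E i) * card (Act E) * card (Obs E))"
    by (simp add: sum_distrib_right)
  then show ?thesis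
    unfolding Lh_def by (simp add: mult_ac)
qed

definition parent_law :: "fsetting \<Rightarrow> model \<Rightarrow> model \<Rightarrow> nat \<Rightarrow> nat \<Rightarrow> state pmf" where
  "parent_law E Ms M h i = map_pmf (\<lambda>x. restrict x (pa E i)) (roll E Ms (pol E M) h)"

lemma expectation_roll_parent_values:
  fixes g :: "state \<Rightarrow> real"
  assumes "valid_setting E" "Ms \<in> models E" "i < nfeat E"
  shows "measure_pmf.expectation (roll E Ms (pol E M) h) (\<lambda>x. g (restrict x (pa E i)))
       = (\<Sum>z\<in>PiE (pa E i) (\<lambda>_. Obs E). pmf (parent_law E Ms M h i) z * g z)"
proof -
  have "measure_pmf.expectation (roll E Ms (pol E M) h) (\<lambda>x. g (restrict x (pa E i)))
      = measure_pmf.expectation (parent_law E Ms M h i) g"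
    unfolding parent_law_def by simp
  also have "\<dots> = (\<Sum>z\<in>PiE (pa E i) (\<lambda>_. Obs E). g z * pmf (parent_law E Ms M h i) z)"
  proof (rule integral_measure_pmf_real)
    fix z assume "z \<in> set_pmf (parent_law E Ms M h i)"
    then obtain x where "x \<in> set_pmf (roll E Ms (pol E M) h)" "z = restrict x (pa E i)"
      unfolding parent_law_def by auto
    then show "z \<in> PiE (pa E i) (\<lambda>_. Obs E)"
      using restrict_state_in_PiE[OF assms(1,3)] set_pmf_roll_subset[OF assms(1,2)] by blast
  qed (rule finite_parent_values[OF assms(1,3)])
  finally show ?thesis
    by (simp add: mult.commute)
qed

lemma misfit_matrix_eq_sum:
  assumes "valid_setting E" "Ms \<in> models E"
  shows "misfit_matrix E Ms h M M' = (\<Sum>(i, z, a)\<in>parent_index E.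
     pmf (parent_law E Ms M h i) z / real (card (Act E)) * factor_dist E Ms M' h i z a)"
proof -
  let ?p = "roll E Ms (pol E M) h"
  let ?K = "real (card (Act E))"
  let ?P = "\<lambda>i. PiE (pa E i) (\<lambda>_. Obs E)"
  let ?w = "\<lambda>i. pmf (parent_law E Ms M h i)"
  let ?D = "factor_dist E Ms M' h"
  have fin: "finite (Act E)" "Act E \<noteq> {}"
    using valid_settingD(3,4)[OF assms(1)] by auto
  have integrable: "integrable (measure_pmf ?p) f" for f :: "state \<Rightarrow> real"
    using finite_set_pmf_roll[OF assms] by (rule integrable_measure_pmf_finite)
  have "misfit_matrix E Ms h M M'
      = measure_pmf.expectation ?p (\<lambda>x. \<Sum>i<nfeat E. \<Sum>a\<in>Act E. ?D i (restrict x (pa E i)) a / ?K)"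
    unfolding misfit_matrix_def integral_pmf_of_set[OF fin(2,1)] sum_divide_distrib
    by (subst sum.swap) (rule refl)
  also have "\<dots> = (\<Sum>i<nfeat E. measure_pmf.expectation ?p (\<lambda>x. \<Sum>a\<in>Act E. ?D i (restrict x (pa E i)) a / ?K))"
    by (rule Bochner_Integration.integral_sum) (rule integrable)
  also have "\<dots> = (\<Sum>i<nfeat E. \<Sum>a\<in>Act E. measure_pmf.expectation ?p (\<lambda>x. ?D i (restrict x (pa E i)) a / ?K))"
    by (intro sum.cong refl Bochner_Integration.integral_sum integrable)
  also have "\<dots> = (\<Sum>i<nfeat E. \<Sum>a\<in>Act E. \<Sum>z\<in>?P i. ?w i z / ?K * ?D i z a)"
  proof (intro sum.cong refl)
    fix i a assume "i \<in> {..<nfeat E}"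
    then show "measure_pmf.expectation ?p (\<lambda>x. ?D i (restrict x (pa E i)) a / ?K)
        = (\<Sum>z\<in>?P i. ?w i z / ?K * ?D i z a)"
      using expectation_roll_parent_values[OF assms, where i = i and g = "\<lambda>z. ?D i z a"]
      by (simp add: sum_divide_distrib)
  qed
  also have "\<dots> = (\<Sum>i<nfeat E. \<Sum>(z, a)\<in>?P i \<times> Act E. ?w i z / ?K * ?D i z a)"
    by (intro sum.cong refl) (subst sum.swap, rule sum.cartesian_product)
  also have "\<dots> = (\<Sum>(i, z, a)\<in>parent_index E. ?w i z / ?K * ?D i z a)"
    unfolding parent_index_def using finite_parent_values[OF assms(1)] fin(1)
    by (subst sum.Sigma) auto
  finally show ?thesis .
qed

lemma misfit_matrix_beta_factorization:
  assumes "valid_setting E" "Ms \<in> models E"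
  shows "beta_factorization (misfit_matrix E Ms h) (models E) (card (parent_index E))
           (real (Lh E) / real (card (Act E)))"
proof -
  have "beta_factorization (misfit_matrix E Ms h) (models E) (card (parent_index E))
      (real (card (parent_index E)) * (1 / real (card (Act E))) * real (card (Obs E)))"
  proof (rule beta_factorization_sum[OF finite_parent_index[OF assms(1)], where
        u = "\<lambda>M (i, z, a). pmf (parent_law E Ms M h i) z / real (card (Act E))"
        and v = "\<lambda>M' (i, z, a). factor_dist E Ms M' h i z a"])
    show "misfit_matrix E Ms h M M' = (\<Sum>j\<in>parent_index E.
        (case j of (i, z, a) \<Rightarrow> pmf (parent_law E Ms M h i) z / real (card (Act E)))
          * (case j of (i, z, a) \<Rightarrow> factor_dist E Ms M' h i z a))" for M M'
      unfolding misfit_matrix_eq_sum[OF assms] by (intro sum.cong) auto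
    show "\<bar>case j of (i, z, a) \<Rightarrow> pmf (parent_law E Ms M h i) z / real (card (Act E))\<bar>
        \<le> 1 / real (card (Act E))" for M j
      by (auto simp: divide_right_mono pmf_le_1 split: prod.splits)
    show "\<bar>case j of (i, z, a) \<Rightarrow> factor_dist E Ms M' h i z a\<bar> \<le> real (card (Obs E))" for M' j
      using factor_dist_nonneg factor_dist_le_card by (auto split: prod.splits)
  qed
  moreover have "real (card (parent_index E)) * (1 / real (card (Act E))) * real (card (Obs E))
      = real (Lh E) / real (card (Act E))"
    by (simp flip: card_parent_index[OF assms(1)])
  ultimately show ?thesis by (simp only:)
qed

lemma Ltot_eq_Hor_mult_Lh: "Ltot E = Hor E * Lh E"
  unfolding Ltot_def Lh_def by (simp add: sum_distrib_left mult_ac)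

theorem mainTheorem12:
  shows "\<exists>c::real. \<forall>E Ms h. valid_setting E \<and> Ms \<in> models E \<and> h \<in> {1..Hor E} \<longrightarrow>
     (\<exists>\<beta>. \<beta> \<le> c * real (Ltot E) / real (card (Act E)) \<and>
        witness_rank_le E Ms (1 / real (card (Act E))) \<beta> h
          (real (Lh E) / real (card (Obs E))))"
proof (rule exI[of _ 1], intro allI impI, elim conjE)
  fix E Ms h
  assume E: "valid_setting E" and Ms: "Ms \<in> models E" and h: "h \<in> {1..Hor E}"
  let ?K = "real (card (Act E))" and ?O = "real (card (Obs E))"
  have "real (card (parent_index E)) \<le> real (Lh E) / ?O"
    using card_parent_index[OF E] valid_settingD(1,2)[OF E]
    by (simp add: card_gt_0_iff field_simps flip: of_nat_mult)
  then have "witness_rank_le E Ms (1 / ?K) (real (Lh E) / ?K) h (real (Lh E) / ?O)"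
    unfolding witness_rank_le_def rank_le_def
    using bellman_err_le_misfit_matrix[OF E Ms] misfit_matrix_le_witness_misfit[OF E Ms]
      misfit_matrix_beta_factorization[OF E Ms]
    by blast
  moreover have "real (Lh E) / ?K \<le> 1 * real (Ltot E) / ?K"
    using h by (simp add: Ltot_eq_Hor_mult_Lh divide_right_mono flip: of_nat_mult)
  ultimately show "\<exists>\<beta>. \<beta> \<le> 1 * real (Ltot E) / ?K \<and>
      witness_rank_le E Ms (1 / ?K) \<beta> h (real (Lh E) / ?O)"
    by blast
qed

end
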